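(* Let $u\le v$ in $S_n$, let $I$ be an order ideal in $[u,v]$, and let $x\in I$ have a strong hypercube cluster $\theta_x:\mathcal{A}_x\to[u,v]$ relative to $I$. Let $\mathcal{I}\subset\mathcal{A}_x$ be any order ideal (with respect to inclusion). Then for any injection $\phi:\mathcal{I}\hookrightarrow[u,v]$ satisfying $\phi(\varnothing)=x$, $\phi(\{y\})=y$ for every singleton $\{y\}\in\mathcal{I}$, and $\phi(Y_1)\to\phi(Y_2)$ in $\Gamma(u,v)$ whenever $Y_1,Y_2\in\mathcal{I}$ with $Y_1\to Y_2$, the map $\phi$ equals the restriction of $\theta_x$ to $\mathcal{I}$.
   Context: $S_n$ is the symmetric group with length $\ell$ (with respect to simple reflections $s_i=(i\ i{+}1)$), $T$ its set of transpositions. The Bruhat graph $\Gamma$ has vertex set $S_n$ and an edge $w\to tw$ whenever $t\in T$, $\ell(w)<\ell(tw)$; Bruhat order $\le$ is reachability in $\Gamma$; $\Gamma(u,v)$ is the induced subgraph on the interval $[u,v]$. An order ideal of $[u,v]$ is a downward closed subset. For an order ideal $I\subset[u,v]$ and $x\in I$ let $\mathcal{Y}_x=\{y\in[u,v]\setminus I: x\to y \text{ in }\Gamma\}$ and $\mathcal{A}_x$ the set of subsets of $\mathcal{Y}_x$ that are antichains in Bruhat order, ordered by inclusion and viewed as a directed graph with $Y_1\to Y_2$ iff $Y_1\subset Y_2$ and $|Y_2\setminus Y_1|=1$. A strong hypercube cluster at $x$ relative to $I$ is a map $\theta_x:\mathcal{A}_x\to[u,v]$ such that: (HC1) $\theta_x(\varnothing)=x$;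 (HC2) $\theta_x(\{y\})=y$ for $y\in\mathcal{Y}_x$; (HC3) if $Y_1\to Y_2$ then $\theta_x(Y_1)\to\theta_x(Y_2)$ is an edge of $\Gamma$; (HC4) if $Y,Y'\in\mathcal{A}_x$ with $|Y|=|Y'|=|Y\cap Y'|+1$ and there is $w$ such that $\theta_x(Y\cap Y')\to\theta_x(Y)\to w$ and $\theta_x(Y\cap Y')\to\theta_x(Y')\to w$ form a diamond (four distinct vertices with these edges) in $\Gamma(u,v)$, then $Y\cup Y'$ is an antichain and $\theta_x(Y\cup Y')=w$. *)

theory Defs
  imports "HOL-Combinatorics.Combinatorics"
begin

type_synonym perm = "nat \<Rightarrow> nat"

definition Sn :: "nat \<Rightarrow> perm set" where
  "Sn n = {w. w permutes {..<n}}"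

text \<open>Coxeter length w.r.t. simple reflections = number of inversions.\<close>
definition len :: "nat \<Rightarrow> perm \<Rightarrow> nat" where
  "len n w = card {(i, j). i < j \<and> j < n \<and> w j < w i}"

definition transpositions :: "nat \<Rightarrow> perm set" where
  "transpositions n = {transpose i j | i j. i < n \<and> j < n \<and> i \<noteq> j}"

definition bruhat_edge :: "nat \<Rightarrow> perm \<Rightarrow> perm \<Rightarrow> bool" where
  "bruhat_edge n w w' \<longleftrightarrow> w \<in> Sn n \<and> (\<exists>t \<in> transpositions n. w' = t \<circ> w) \<and> len n w < len n w'"

definition bruhat_le :: "nat \<Rightarrow> perm \<Rightarrow> perm \<Rightarrow> bool" where
  "bruhat_le n u v \<longleftrightarrow> u \<in> Sn n \<and> (bruhat_edge n)\<^sup>*\<^sup>* u v"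

definition bruhat_interval :: "nat \<Rightarrow> perm \<Rightarrow> perm \<Rightarrow> perm set" where
  "bruhat_interval n u v = {w. bruhat_le n u w \<and> bruhat_le n w v}"

definition is_order_ideal :: "nat \<Rightarrow> perm \<Rightarrow> perm \<Rightarrow> perm set \<Rightarrow> bool" where
  "is_order_ideal n u v I \<longleftrightarrow> I \<subseteq> bruhat_interval n u v \<and>
     (\<forall>a \<in> I. \<forall>b \<in> bruhat_interval n u v. bruhat_le n b a \<longrightarrow> b \<in> I)"

definition bruhat_antichain :: "nat \<Rightarrow> perm set \<Rightarrow> bool" where
  "bruhat_antichain n Y \<longleftrightarrow> (\<forall>a \<in> Y. \<forall>b \<in> Y. bruhat_le n a b \<longrightarrow> a = b)"

definition Ycal :: "nat \<Rightarrow> perm \<Rightarrow> perm \<Rightarrow> perm set \<Rightarrow> perm \<Rightarrow> perm set" where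
  "Ycal n u v I x = {y \<in> bruhat_interval n u v - I. bruhat_edge n x y}"

definition Acal :: "nat \<Rightarrow> perm \<Rightarrow> perm \<Rightarrow> perm set \<Rightarrow> perm \<Rightarrow> perm set set" where
  "Acal n u v I x = {Y. Y \<subseteq> Ycal n u v I x \<and> bruhat_antichain n Y}"

definition cover_edge :: "'a set \<Rightarrow> 'a set \<Rightarrow> bool" where
  "cover_edge Y1 Y2 \<longleftrightarrow> Y1 \<subseteq> Y2 \<and> card (Y2 - Y1) = 1"

definition strong_hypercube_cluster ::
  "nat \<Rightarrow> perm \<Rightarrow> perm \<Rightarrow> perm set \<Rightarrow> perm \<Rightarrow> (perm set \<Rightarrow> perm) \<Rightarrow> bool" where
  "strong_hypercube_cluster n u v I x \<theta> \<longleftrightarrow>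
     (\<forall>Y \<in> Acal n u v I x. \<theta> Y \<in> bruhat_interval n u v) \<and>
     \<theta> {} = x \<and>
     (\<forall>y \<in> Ycal n u v I x. \<theta> {y} = y) \<and>
     (\<forall>Y1 \<in> Acal n u v I x. \<forall>Y2 \<in> Acal n u v I x.
        cover_edge Y1 Y2 \<longrightarrow> bruhat_edge n (\<theta> Y1) (\<theta> Y2)) \<and>
     (\<forall>Y \<in> Acal n u v I x. \<forall>Y' \<in> Acal n u v I x. \<forall>w \<in> bruhat_interval n u v.
        card Y = card (Y \<inter> Y') + 1 \<and> card Y' = card (Y \<inter> Y') + 1 \<and>
        distinct [\<theta> (Y \<inter> Y'), \<theta> Y, \<theta> Y', w] \<and>
        bruhat_edge n (\<theta> (Y \<inter> Y')) (\<theta> Y) \<and> bruhat_edge n (\<theta> Y) w \<and>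
        bruhat_edge n (\<theta> (Y \<inter> Y')) (\<theta> Y') \<and> bruhat_edge n (\<theta> Y') w
        \<longrightarrow> bruhat_antichain n (Y \<union> Y') \<and> \<theta> (Y \<union> Y') = w)"

end

theory Submission
  imports Defs
begin

text \<open>Induct on the size of Y. A set Y with two distinct elements a and b is the top of the
  square Y - {a, b}, Y - {a}, Y - {b}, Y. Once \<phi> agrees with \<theta> on its three lower corners,
  injectivity and edge preservation make \<phi> send the square to a diamond of the Bruhat graph,
  so (HC4) forces \<theta> Y = \<phi> Y.\<close>

lemma finite_diamond_induct [consumes 1, case_names empty singleton diamond]:
  assumes "finite Y"
    and "P {}"
    and "\<And>y. P {y}"
    and "\<And>Y a b. finite Y \<Longrightarrow> a \<in> Y \<Longrightarrow> b \<in> Y \<Longrightarrow> a \<noteq> b \<Longrightarrow>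
           P (Y - {a}) \<Longrightarrow> P (Y - {b}) \<Longrightarrow> P (Y - {a, b}) \<Longrightarrow> P Y"
  shows "P Y"
  using assms(1)
proof (induction rule: finite_psubset_induct)
  case (psubset Y)
  consider "Y = {}" | y where "Y = {y}" | a b where "a \<in> Y" "b \<in> Y" "a \<noteq> b"
    by blast
  then show ?case
  proof cases
    case 3
    then have "Y - {a} \<subset> Y" "Y - {b} \<subset> Y" "Y - {a, b} \<subset> Y" by blast+
    then show ?thesis using 3 psubset assms(4) by metis
  qed (use assms(2,3) in simp_all)
qed

lemma cover_edge_Diff_singleton: "a \<in> Y \<Longrightarrow> cover_edge (Y - {a}) Y"
  unfolding cover_edge_def by (simp add: Diff_Diff_Int insert_absorb)

lemma bruhat_edge_target_in_Sn: "bruhat_edge n w w' \<Longrightarrow> w' \<in> Sn n"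
proof -
  assume "bruhat_edge n w w'"
  then obtain i j where "w \<in> Sn n" "i < n" "j < n" "w' = transpose i j \<circ> w"
    unfolding bruhat_edge_def transpositions_def by blast
  then show "w' \<in> Sn n"
    unfolding Sn_def by (simp add: permutes_compose permutes_swap_id)
qed

lemma finite_Ycal: "finite (Ycal n u v I x)"
proof (rule finite_subset)
  show "Ycal n u v I x \<subseteq> Sn n"
    unfolding Ycal_def using bruhat_edge_target_in_Sn by blast
  show "finite (Sn n)"
    unfolding Sn_def by (rule finite_permutations) simp
qed

lemma finite_if_in_Acal: "Y \<in> Acal n u v I x \<Longrightarrow> finite Y"
  unfolding Acal_def by (auto intro: finite_subset[OF _ finite_Ycal])

lemma Acal_downward_closed: "Y \<in> Acal n u v I x \<Longrightarrow> Z \<subseteq> Y \<Longrightarrow> Z \<in> Acal n u v I x"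
  unfolding Acal_def bruhat_antichain_def by blast

lemma strong_hypercube_cluster_diamond_top:
  assumes cluster: "strong_hypercube_cluster n u v I x \<theta>"
    and Y: "Y \<in> Acal n u v I x" "a \<in> Y" "b \<in> Y" "a \<noteq> b"
    and w: "w \<in> bruhat_interval n u v"
    and distinct: "distinct [\<theta> (Y - {a, b}), \<theta> (Y - {a}), \<theta> (Y - {b}), w]"
    and edges: "bruhat_edge n (\<theta> (Y - {a, b})) (\<theta> (Y - {a}))" "bruhat_edge n (\<theta> (Y - {a})) w"
      "bruhat_edge n (\<theta> (Y - {a, b})) (\<theta> (Y - {b}))" "bruhat_edge n (\<theta> (Y - {b})) w"
  shows "\<theta> Y = w"
proof -
  let ?Ya = "Y - {a}" and ?Yb = "Y - {b}"
  have meet: "?Ya \<inter> ?Yb = Y - {a, b}" and join: "?Ya \<union> ?Yb = Y"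
    using Y by blast+
  have "card Y \<ge> 2"
    using Y finite_if_in_Acal[OF Y(1)] card_mono[of Y "{a, b}"] by auto
  then have card: "card ?Ya = card (?Ya \<inter> ?Yb) + 1" "card ?Yb = card (?Ya \<inter> ?Yb) + 1"
    using Y by (simp_all add: meet card_Diff_subset)
  have "?Ya \<in> Acal n u v I x" "?Yb \<in> Acal n u v I x"
    using Acal_downward_closed[OF Y(1)] by blast+
  moreover note distinct edges
  ultimately have "\<theta> (?Ya \<union> ?Yb) = w"
    using cluster[unfolded strong_hypercube_cluster_def, THEN conjunct2, THEN conjunct2,
        THEN conjunct2, THEN conjunct2] w card
    unfolding meet[symmetric] by blast
  then show ?thesis
    by (simp add: join)
qed

lemma edge_preserving_injection_eq_cluster_at_diamond_top:
  assumes cluster: "strong_hypercube_cluster n u v I x \<theta>"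
    and family: "\<II> \<subseteq> Acal n u v I x" "\<forall>Y \<in> \<II>. \<forall>Z. Z \<subseteq> Y \<longrightarrow> Z \<in> \<II>"
    and inj: "inj_on \<phi> \<II>"
    and range: "\<phi> ` \<II> \<subseteq> bruhat_interval n u v"
    and edge_preserving: "\<forall>Y1 \<in> \<II>. \<forall>Y2 \<in> \<II>. cover_edge Y1 Y2 \<longrightarrow> bruhat_edge n (\<phi> Y1) (\<phi> Y2)"
    and Y: "Y \<in> \<II>" "a \<in> Y" "b \<in> Y" "a \<noteq> b"
    and agree: "\<phi> (Y - {a}) = \<theta> (Y - {a})" "\<phi> (Y - {b}) = \<theta> (Y - {b})"
      "\<phi> (Y - {a, b}) = \<theta> (Y - {a, b})"
  shows "\<phi> Y = \<theta> Y"
proof -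
  have lower: "Y - {a} \<in> \<II>" "Y - {b} \<in> \<II>" "Y - {a, b} \<in> \<II>"
    using Y family(2) by blast+
  have "Y - {a, b} = Y - {a} - {b}" "Y - {a, b} = Y - {b} - {a}"
    by blast+
  then have edges: "bruhat_edge n (\<phi> (Y - {a, b})) (\<phi> (Y - {a}))"
    "bruhat_edge n (\<phi> (Y - {a})) (\<phi> Y)" "bruhat_edge n (\<phi> (Y - {a, b})) (\<phi> (Y - {b}))"
    "bruhat_edge n (\<phi> (Y - {b})) (\<phi> Y)"
    using edge_preserving lower Y cover_edge_Diff_singleton by (metis DiffI singletonD)+
  have "distinct [Y - {a, b}, Y - {a}, Y - {b}, Y]"
    using Y by auto
  then have "distinct [\<phi> (Y - {a, b}), \<phi> (Y - {a}), \<phi> (Y - {b}), \<phi> Y]"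
    using lower Y by (simp add: inj_on_eq_iff[OF inj])
  moreover have "Y \<in> Acal n u v I x" "\<phi> Y \<in> bruhat_interval n u v"
    using Y family(1) range by blast+
  ultimately show ?thesis
    using strong_hypercube_cluster_diamond_top[OF cluster _ Y(2-4)] edges
    unfolding agree by simp
qed

theorem lemma3p5:
  fixes n :: nat and u v x :: perm and I :: "perm set"
    and \<theta> :: "perm set \<Rightarrow> perm" and \<II> :: "perm set set" and \<phi> :: "perm set \<Rightarrow> perm"
  assumes "bruhat_le n u v"
    and "is_order_ideal n u v I"
    and "x \<in> I"
    and "strong_hypercube_cluster n u v I x \<theta>"
    and "\<II> \<subseteq> Acal n u v I x"
    and "\<forall>Y \<in> \<II>. \<forall>Z. Z \<subseteq> Y \<longrightarrow> Z \<in> \<II>"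
    and "inj_on \<phi> \<II>"
    and "\<phi> ` \<II> \<subseteq> bruhat_interval n u v"
    and "\<phi> {} = x"
    and "\<forall>y. {y} \<in> \<II> \<longrightarrow> \<phi> {y} = y"
    and "\<forall>Y1 \<in> \<II>. \<forall>Y2 \<in> \<II>. cover_edge Y1 Y2 \<longrightarrow> bruhat_edge n (\<phi> Y1) (\<phi> Y2)"
  shows "\<forall>Y \<in> \<II>. \<phi> Y = \<theta> Y"
proof
  fix Y assume "Y \<in> \<II>"
  then have "finite Y" using assms(5) finite_if_in_Acal by blast
  then show "\<phi> Y = \<theta> Y" using \<open>Y \<in> \<II>\<close>
  proof (induction rule: finite_diamond_induct)
    case empty
    then show ?case using assms(4,9) unfolding strong_hypercube_cluster_def by simp
  next
    case (singleton y)
    then have "y \<in> Ycal n u v I x" using assms(5) unfolding Acal_def by blast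
    then show ?case using singleton assms(4,10) unfolding strong_hypercube_cluster_def by simp
  next
    case (diamond Y a b)
    have "Y - {a} \<in> \<II>" "Y - {b} \<in> \<II>" "Y - {a, b} \<in> \<II>"
      using diamond.prems assms(6) by blast+
    then show ?case
      by (intro edge_preserving_injection_eq_cluster_at_diamond_top[OF assms(4-8,11)
          diamond.prems diamond.hyps(2-4)] diamond.IH)
  qed
qed

end
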